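(* In a finite-space SSP game (as in the context), let $\bar\nu\in\Pi_{2,SR}$ be a proper policy of player II. Then the mapping $F_{\bar\nu}$ is a contraction with respect to some weighted sup-norm $\|\cdot\|_\xi$: there exist a positive vector $\xi$ on $R$ and $\beta\in[0,1)$ such that $\|F_{\bar\nu}Q-F_{\bar\nu}Q'\|_\xi\le\beta\|Q-Q'\|_\xi$ for all $Q,Q'\in\mathbb{R}^R$.
   Context: Finite-space game: $S=\{1,\dots,n\}$, $S_o=S\cup\{0\}$, $0$ absorbing cost-free termination state. At $i\in S$ players I and II have finite control sets $U(i),V(i)$; under $(u,v)$ the state moves to $j\in S_o$ w.p. $p_{ij}(u,v)$, with expected one-stage cost $g(i,u,v)$. $\Pi_{1,SR},\Pi_{2,SR}$: stationary randomized policies $\mu=\{\mu(\cdot\mid i)\in\mathcal P(U(i))\}$, $\nu=\{\nu(\cdot\mid i)\in\mathcal P(V(i))\}$. A pair of policies is non-prolonging if the termination state is reached w.p.1 from every initial state. $\nu\in\Pi_{2,SR}$ is proper if $(\mu,\nu)$ is non-prolonging for every $\mu\in\Pi_{1,SR}$. $R=\{(i,u,v):i\in S,u\in U(i),v\in V(i)\}$. For $\bar\nu\in\Pi_{2,SR}$ write $\bar\nu_j=\bar\nu(\cdot\mid j)$ and define $F_{\bar\nu}:\mathbb{R}^R\to\mathbb{R}^R$ by $(F_{\bar\nu}Q)(i,u,v)=g(i,u,v)+\sum_{j\in S}p_{ij}(u,v)\min_{\tilde u\in U(j)}\sum_{\tilde v\in V(j)}\bar\nu_j(\tilde v)Q(j,\tilde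 u,\tilde v)$. For a positive vector $\xi$ on $R$, $\|Q\|_\xi=\max_{(i,u,v)\in R}|Q(i,u,v)|/\xi(i,u,v)$. *)

theory Defs
  imports "HOL-Analysis.Analysis"
begin

text \<open>States: S = {1..n}, termination state 0. Control sets U i, V i.
  Transition probabilities p i j u v (j in {0..n}), one-stage costs g i u v.\<close>

definition ssp_game ::
  "nat \<Rightarrow> (nat \<Rightarrow> 'u set) \<Rightarrow> (nat \<Rightarrow> 'v set) \<Rightarrow> (nat \<Rightarrow> nat \<Rightarrow> 'u \<Rightarrow> 'v \<Rightarrow> real) \<Rightarrow> bool" where
  "ssp_game n U V p \<longleftrightarrow>
     (\<forall>i\<in>{1..n}. finite (U i) \<and> U i \<noteq> {} \<and> finite (V i) \<and> V i \<noteq> {} \<and>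
        (\<forall>u\<in>U i. \<forall>v\<in>V i. (\<forall>j\<in>{0..n}. p i j u v \<ge> 0) \<and> (\<Sum>j\<in>{0..n}. p i j u v) = 1))"

definition is_SR_policy :: "nat \<Rightarrow> (nat \<Rightarrow> 'a set) \<Rightarrow> (nat \<Rightarrow> 'a \<Rightarrow> real) \<Rightarrow> bool" where
  "is_SR_policy n A \<mu> \<longleftrightarrow> (\<forall>i\<in>{1..n}. (\<forall>a\<in>A i. \<mu> i a \<ge> 0) \<and> (\<Sum>a\<in>A i. \<mu> i a) = 1)"

definition trans_prob ::
  "(nat \<Rightarrow> 'u set) \<Rightarrow> (nat \<Rightarrow> 'v set) \<Rightarrow> (nat \<Rightarrow> nat \<Rightarrow> 'u \<Rightarrow> 'v \<Rightarrow> real) \<Rightarrow>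
   (nat \<Rightarrow> 'u \<Rightarrow> real) \<Rightarrow> (nat \<Rightarrow> 'v \<Rightarrow> real) \<Rightarrow> nat \<Rightarrow> nat \<Rightarrow> real" where
  "trans_prob U V p \<mu> \<nu> i j = (\<Sum>u\<in>U i. \<Sum>v\<in>V i. \<mu> i u * \<nu> i v * p i j u v)"

text \<open>k-step transition probabilities between non-terminal states (paths staying in S).\<close>
fun kstep ::
  "nat \<Rightarrow> (nat \<Rightarrow> 'u set) \<Rightarrow> (nat \<Rightarrow> 'v set) \<Rightarrow> (nat \<Rightarrow> nat \<Rightarrow> 'u \<Rightarrow> 'v \<Rightarrow> real) \<Rightarrow>
   (nat \<Rightarrow> 'u \<Rightarrow> real) \<Rightarrow> (nat \<Rightarrow> 'v \<Rightarrow> real) \<Rightarrow> nat \<Rightarrow> nat \<Rightarrow> nat \<Rightarrow> real" where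
  "kstep n U V p \<mu> \<nu> 0 i j = (if i = j then 1 else 0)"
| "kstep n U V p \<mu> \<nu> (Suc k) i j =
     (\<Sum>l\<in>{1..n}. trans_prob U V p \<mu> \<nu> i l * kstep n U V p \<mu> \<nu> k l j)"

text \<open>Non-prolonging: from every initial state, the probability of not having reached the
  (absorbing) termination state 0 by time k tends to 0, i.e. termination is reached w.p.1.\<close>
definition non_prolonging where
  "non_prolonging n U V p \<mu> \<nu> \<longleftrightarrow>
     (\<forall>i\<in>{1..n}. (\<lambda>k. \<Sum>j\<in>{1..n}. kstep n U V p \<mu> \<nu> k i j) \<longlonglongrightarrow> 0)"

definition proper_II where
  "proper_II n U V p \<nu> \<longleftrightarrow>
     is_SR_policy n V \<nu> \<and> (\<forall>\<mu>. is_SR_policy n U \<mu> \<longrightarrow> non_prolonging n U V p \<mu> \<nu>)"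

definition Rset :: "nat \<Rightarrow> (nat \<Rightarrow> 'u set) \<Rightarrow> (nat \<Rightarrow> 'v set) \<Rightarrow> (nat \<times> 'u \<times> 'v) set" where
  "Rset n U V = {(i, u, v). i \<in> {1..n} \<and> u \<in> U i \<and> v \<in> V i}"

definition F_map ::
  "nat \<Rightarrow> (nat \<Rightarrow> 'u set) \<Rightarrow> (nat \<Rightarrow> 'v set) \<Rightarrow> (nat \<Rightarrow> nat \<Rightarrow> 'u \<Rightarrow> 'v \<Rightarrow> real) \<Rightarrow>
   (nat \<Rightarrow> 'u \<Rightarrow> 'v \<Rightarrow> real) \<Rightarrow> (nat \<Rightarrow> 'v \<Rightarrow> real) \<Rightarrow>
   (nat \<Rightarrow> 'u \<Rightarrow> 'v \<Rightarrow> real) \<Rightarrow> (nat \<Rightarrow> 'u \<Rightarrow> 'v \<Rightarrow> real)" where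
  "F_map n U V p g \<nu> Q = (\<lambda>i u v. g i u v +
     (\<Sum>j\<in>{1..n}. p i j u v * Min ((\<lambda>u'. \<Sum>v'\<in>V j. \<nu> j v' * Q j u' v') ` U j)))"

text \<open>Weighted sup-norm over R (the value 0 is included only to make it well-defined when R is empty).\<close>
definition wnorm ::
  "nat \<Rightarrow> (nat \<Rightarrow> 'u set) \<Rightarrow> (nat \<Rightarrow> 'v set) \<Rightarrow> (nat \<Rightarrow> 'u \<Rightarrow> 'v \<Rightarrow> real) \<Rightarrow>
   (nat \<Rightarrow> 'u \<Rightarrow> 'v \<Rightarrow> real) \<Rightarrow> real" where
  "wnorm n U V \<xi> Q = Max (insert 0 ((\<lambda>(i, u, v). \<bar>Q i u v\<bar> / \<xi> i u v) ` Rset n U V))"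

end

theory Submission
  imports Defs "HOL-Library.While_Combinator"
begin

text \<open>Once player II is fixed to the proper policy \<open>\<nu>\<close>, player I faces a stopping problem with
  averaged kernel \<open>q j u k = \<Sum>\<^sub>v \<nu> j v * p j k u v\<close>. Properness yields a ranking \<open>r\<close> of the states:
  from every state and under every control, termination or a state of smaller rank is reached with
  positive probability. Otherwise the states never collected by the Kleene iteration of this
  condition form a nonempty class in which some deterministic policy of player I traps the chain.
  If \<open>c\<close> lies below all the relevant positive probabilities, the weights \<open>x k = 2 - c ^ (r k + 1)\<close>
  satisfy \<open>\<Sum>\<^sub>k q j u k * x k \<le> \<rho> * x j\<close> for some \<open>\<rho> < 1\<close>, and then \<open>F\<close> contracts the norm weighted by
  \<open>\<xi> i u v = 1 + \<Sum>\<^sub>j p i j u v * x j\<close> with modulus \<open>(1 + \<rho>) / 2\<close>.\<close>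

subsection \<open>Ranking the states of a finite controlled graph\<close>

definition escape_step :: "'s set \<Rightarrow> ('s \<Rightarrow> 'a set) \<Rightarrow> ('s \<Rightarrow> 'a \<Rightarrow> 's \<Rightarrow> bool) \<Rightarrow> 's set \<Rightarrow> 's set" where
  "escape_step S A E W = {j \<in> S. \<forall>u\<in>A j. \<exists>k. E j u k \<and> (k \<notin> S \<or> k \<in> W)}"

lemma mono_escape_step: "mono (escape_step S A E)"
  unfolding escape_step_def by (rule monoI) blast

lemma escape_step_subset: "escape_step S A E W \<subseteq> S"
  unfolding escape_step_def by blast

lemma lfp_escape_step_eq_funpow:
  assumes "finite S"
  obtains m where "lfp (escape_step S A E) = (escape_step S A E ^^ m) {}"
proof -
  have "\<And>W. W \<subseteq> S \<Longrightarrow> escape_step S A E W \<subseteq> S"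
    by (rule escape_step_subset)
  then obtain P where "while_option (\<lambda>W. escape_step S A E W \<noteq> W) (escape_step S A E) {} = Some P"
    using while_option_finite_subset_Some[OF mono_escape_step _ assms] by blast
  from while_option_stop2[OF this] obtain m where "(escape_step S A E ^^ Suc m) {} = (escape_step S A E ^^ m) {}"
    by auto
  then show thesis using lfp_Kleene_iter[OF mono_escape_step] that by blast
qed

lemma ranking_or_trap:
  fixes E :: "'s \<Rightarrow> 'a \<Rightarrow> 's \<Rightarrow> bool"
  assumes "finite S"
  obtains r :: "'s \<Rightarrow> nat" where "\<forall>j\<in>S. \<forall>u\<in>A j. \<exists>k. E j u k \<and> (k \<notin> S \<or> r k < r j)"
  | C where "C \<subseteq> S" "C \<noteq> {}" "\<forall>j\<in>C. \<exists>u\<in>A j. \<forall>k. E j u k \<longrightarrow> k \<in> C"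
proof (cases "S \<subseteq> lfp (escape_step S A E)")
  case True
  let ?W = "\<lambda>t. (escape_step S A E ^^ t) {}"
  obtain m where m: "lfp (escape_step S A E) = ?W m"
    using lfp_escape_step_eq_funpow[OF assms] .
  define r where "r j = (LEAST t. j \<in> ?W t)" for j
  have "\<exists>k. E j u k \<and> (k \<notin> S \<or> r k < r j)" if j: "j \<in> S" and u: "u \<in> A j" for j u
  proof -
    have "j \<in> ?W m" using True j m by blast
    then have "j \<in> ?W (r j)"
      unfolding r_def by (rule LeastI)
    moreover from this obtain t where t: "r j = Suc t"
      by (cases "r j") auto
    ultimately obtain k where k: "E j u k" "k \<notin> S \<or> k \<in> ?W t"
      using u by (auto simp: escape_step_def)
    have "r k < r j" if "k \<in> ?W t"
      using Least_le[of "\<lambda>t. k \<in> ?W t", OF that] t by (simp add: r_def)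
    with k show ?thesis by blast
  qed
  then show thesis using that(1) by blast
next
  case False
  define L where "L = lfp (escape_step S A E)"
  define C where "C = S - L"
  have "escape_step S A E L = L"
    unfolding L_def by (rule lfp_fixpoint[OF mono_escape_step])
  then have "\<exists>u\<in>A j. \<forall>k. E j u k \<longrightarrow> k \<in> C" if "j \<in> C" for j
    using that unfolding C_def escape_step_def by blast
  moreover have "C \<subseteq> S" "C \<noteq> {}" using False by (auto simp: C_def L_def)
  ultimately show thesis using that(2) by blast
qed

subsection \<open>Properness of the policy of player II\<close>

definition avg_kernel ::
  "(nat \<Rightarrow> 'v set) \<Rightarrow> (nat \<Rightarrow> nat \<Rightarrow> 'u \<Rightarrow> 'v \<Rightarrow> real) \<Rightarrow> (nat \<Rightarrow> 'v \<Rightarrow> real) \<Rightarrow>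
   nat \<Rightarrow> 'u \<Rightarrow> nat \<Rightarrow> real" where
  "avg_kernel V p \<nu> j u k = (\<Sum>v\<in>V j. \<nu> j v * p j k u v)"

definition det_policy :: "(nat \<Rightarrow> 'a) \<Rightarrow> nat \<Rightarrow> 'a \<Rightarrow> real" where
  "det_policy ch i a = (if a = ch i then 1 else 0)"

lemma avg_kernel_nonneg:
  assumes "ssp_game n U V p" "is_SR_policy n V \<nu>" "j \<in> {1..n}" "u \<in> U j" "k \<in> {0..n}"
  shows "0 \<le> avg_kernel V p \<nu> j u k"
  using assms unfolding avg_kernel_def ssp_game_def is_SR_policy_def
  by (intro sum_nonneg mult_nonneg_nonneg) auto

lemma avg_kernel_sum:
  assumes "ssp_game n U V p" "is_SR_policy n V \<nu>" "j \<in> {1..n}" "u \<in> U j"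
  shows "(\<Sum>k\<in>{0..n}. avg_kernel V p \<nu> j u k) = 1"
proof -
  have "(\<Sum>k\<in>{0..n}. avg_kernel V p \<nu> j u k) = (\<Sum>v\<in>V j. \<nu> j v * (\<Sum>k\<in>{0..n}. p j k u v))"
    unfolding avg_kernel_def by (simp add: sum_distrib_left sum.swap[of _ "{0..n}"])
  also have "\<dots> = (\<Sum>v\<in>V j. \<nu> j v)"
    using assms(1,3,4) by (intro sum.cong) (auto simp: ssp_game_def)
  also have "\<dots> = 1"
    using assms(2,3) by (simp add: is_SR_policy_def)
  finally show ?thesis .
qed

lemma avg_kernel_sum_states:
  assumes "ssp_game n U V p" "is_SR_policy n V \<nu>" "j \<in> {1..n}" "u \<in> U j"
  shows "(\<Sum>k\<in>{1..n}. avg_kernel V p \<nu> j u k) = 1 - avg_kernel V p \<nu> j u 0"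
  using avg_kernel_sum[OF assms] sum.atLeast_Suc_atMost[of 0 n "avg_kernel V p \<nu> j u"] by simp

lemma is_SR_policy_det_policy:
  assumes "ssp_game n U V p" "\<And>i. i \<in> {1..n} \<Longrightarrow> ch i \<in> U i"
  shows "is_SR_policy n U (det_policy ch)"
  using assms unfolding is_SR_policy_def det_policy_def ssp_game_def by (simp add: sum.delta')

lemma trans_prob_det_policy:
  assumes "finite (U i)" "ch i \<in> U i"
  shows "trans_prob U V p (det_policy ch) \<nu> i l = avg_kernel V p \<nu> i (ch i) l"
proof -
  have "(\<Sum>v\<in>V i. det_policy ch i u * \<nu> i v * p i l u v) =
        (if u = ch i then avg_kernel V p \<nu> i u l else 0)" for u
    unfolding det_policy_def avg_kernel_def by simp
  then show ?thesis
    using assms unfolding trans_prob_def by (simp add: sum.delta')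
qed

lemma kstep_nonneg:
  assumes "\<And>i l. i \<in> {1..n} \<Longrightarrow> l \<in> {1..n} \<Longrightarrow> 0 \<le> trans_prob U V p \<mu> \<nu> i l"
    and "i \<in> {1..n}"
  shows "0 \<le> kstep n U V p \<mu> \<nu> k i j"
  using assms(2) by (induction k arbitrary: i) (auto intro!: sum_nonneg mult_nonneg_nonneg assms(1))

lemma kstep_closed_class_mass:
  assumes C: "C \<subseteq> {1..n}"
    and leave: "\<And>i l. i \<in> C \<Longrightarrow> l \<in> {1..n} - C \<Longrightarrow> trans_prob U V p \<mu> \<nu> i l = 0"
    and stay: "\<And>i. i \<in> C \<Longrightarrow> (\<Sum>l\<in>C. trans_prob U V p \<mu> \<nu> i l) = 1"
    and "i \<in> C"
  shows "(\<Sum>j\<in>C. kstep n U V p \<mu> \<nu> k i j) = 1"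
  using \<open>i \<in> C\<close>
proof (induction k arbitrary: i)
  case 0
  then show ?case using C by (auto simp: sum.delta finite_subset)
next
  case (Suc k)
  have "(\<Sum>j\<in>C. kstep n U V p \<mu> \<nu> (Suc k) i j)
      = (\<Sum>l\<in>{1..n}. trans_prob U V p \<mu> \<nu> i l * (\<Sum>j\<in>C. kstep n U V p \<mu> \<nu> k l j))"
    by (simp add: sum_distrib_left sum.swap[of _ C])
  also have "\<dots> = (\<Sum>l\<in>C. trans_prob U V p \<mu> \<nu> i l * (\<Sum>j\<in>C. kstep n U V p \<mu> \<nu> k l j))"
    using C leave[OF Suc.prems] by (intro sum.mono_neutral_right) auto
  also have "\<dots> = (\<Sum>l\<in>C. trans_prob U V p \<mu> \<nu> i l)"
    using Suc.IH by simp
  finally show ?case using stay[OF Suc.prems] by simp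
qed

lemma closed_class_not_non_prolonging:
  assumes "C \<subseteq> {1..n}" "C \<noteq> {}"
    and nonneg: "\<And>i l. i \<in> {1..n} \<Longrightarrow> l \<in> {1..n} \<Longrightarrow> 0 \<le> trans_prob U V p \<mu> \<nu> i l"
    and "\<And>i l. i \<in> C \<Longrightarrow> l \<in> {1..n} - C \<Longrightarrow> trans_prob U V p \<mu> \<nu> i l = 0"
    and "\<And>i. i \<in> C \<Longrightarrow> (\<Sum>l\<in>C. trans_prob U V p \<mu> \<nu> i l) = 1"
  shows "\<not> non_prolonging n U V p \<mu> \<nu>"
proof
  assume "non_prolonging n U V p \<mu> \<nu>"
  obtain i where i: "i \<in> C" using assms(2) by blast
  with assms(1) have "(\<lambda>k. \<Sum>j\<in>{1..n}. kstep n U V p \<mu> \<nu> k i j) \<longlonglongrightarrow> 0"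
    using \<open>non_prolonging n U V p \<mu> \<nu>\<close> by (auto simp: non_prolonging_def)
  moreover have "1 \<le> (\<Sum>j\<in>{1..n}. kstep n U V p \<mu> \<nu> k i j)" for k
  proof -
    have "1 = (\<Sum>j\<in>C. kstep n U V p \<mu> \<nu> k i j)"
      using kstep_closed_class_mass[OF assms(1,4,5) i] by simp
    also have "\<dots> \<le> (\<Sum>j\<in>{1..n}. kstep n U V p \<mu> \<nu> k i j)"
      using assms(1) i by (intro sum_mono2 kstep_nonneg[OF nonneg]) auto
    finally show ?thesis .
  qed
  ultimately have "(1::real) \<le> 0" by (intro LIMSEQ_le_const) auto
  then show False by simp
qed

lemma proper_imp_ranking:
  assumes game: "ssp_game n U V p" and proper: "proper_II n U V p \<nu>"
  obtains r :: "nat \<Rightarrow> nat" where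
    "\<And>j u. j \<in> {1..n} \<Longrightarrow> u \<in> U j \<Longrightarrow>
       0 < avg_kernel V p \<nu> j u 0 \<or> (\<exists>k\<in>{1..n}. 0 < avg_kernel V p \<nu> j u k \<and> r k < r j)"
proof -
  let ?q = "avg_kernel V p \<nu>"
  have SR: "is_SR_policy n V \<nu>" using proper by (simp add: proper_II_def)
  have Ui: "finite (U i)" "U i \<noteq> {}" if "i \<in> {1..n}" for i
    using game that by (auto simp: ssp_game_def)
  show thesis
  proof (rule ranking_or_trap[of "{1..n}" U "\<lambda>j u k. k \<in> {0..n} \<and> 0 < ?q j u k"])
    fix r :: "nat \<Rightarrow> nat"
    assume rank: "\<forall>j\<in>{1..n}. \<forall>u\<in>U j. \<exists>k. (k \<in> {0..n} \<and> 0 < ?q j u k) \<and> (k \<notin> {1..n} \<or> r k < r j)"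
    show thesis
    proof (rule that)
      fix j u assume "j \<in> {1..n}" "u \<in> U j"
      with rank obtain k where "k \<in> {0..n}" "0 < ?q j u k" "k \<notin> {1..n} \<or> r k < r j"
        by blast
      then show "0 < ?q j u 0 \<or> (\<exists>k\<in>{1..n}. 0 < ?q j u k \<and> r k < r j)"
        by (cases "k = 0") auto
    qed
  next
    fix C assume C: "C \<subseteq> {1..n}" "C \<noteq> {}"
      and trap: "\<forall>j\<in>C. \<exists>u\<in>U j. \<forall>k. k \<in> {0..n} \<and> 0 < ?q j u k \<longrightarrow> k \<in> C"
    define ch where
      "ch j = (SOME u. u \<in> U j \<and> (j \<in> C \<longrightarrow> (\<forall>k\<in>{0..n}. 0 < ?q j u k \<longrightarrow> k \<in> C)))" for j
    have ch: "ch j \<in> U j" "j \<in> C \<Longrightarrow> k \<in> {0..n} - C \<Longrightarrow> ?q j (ch j) k = 0" if j: "j \<in> {1..n}" for j k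
    proof -
      have "\<exists>u. u \<in> U j \<and> (j \<in> C \<longrightarrow> (\<forall>k\<in>{0..n}. 0 < ?q j u k \<longrightarrow> k \<in> C))"
      proof (cases "j \<in> C")
        case True
        then show ?thesis using trap by fastforce
      next
        case False
        then show ?thesis using Ui[OF j] by blast
      qed
      then have "ch j \<in> U j \<and> (j \<in> C \<longrightarrow> (\<forall>k\<in>{0..n}. 0 < ?q j (ch j) k \<longrightarrow> k \<in> C))"
        unfolding ch_def by (rule someI_ex)
      then show "ch j \<in> U j" "j \<in> C \<Longrightarrow> k \<in> {0..n} - C \<Longrightarrow> ?q j (ch j) k = 0"
        using avg_kernel_nonneg[OF game SR j, of "ch j" k] by force+
    qed
    have tp: "trans_prob U V p (det_policy ch) \<nu> i l = ?q i (ch i) l" if "i \<in> {1..n}" for i l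
      using trans_prob_det_policy[of U i ch, OF Ui(1)[OF that] ch(1)[OF that]] .
    have "\<not> non_prolonging n U V p (det_policy ch) \<nu>"
    proof (rule closed_class_not_non_prolonging[OF C])
      fix i assume i: "i \<in> C"
      then have iS: "i \<in> {1..n}" using C by blast
      have "(\<Sum>l\<in>C. ?q i (ch i) l) = (\<Sum>l\<in>{0..n}. ?q i (ch i) l)"
        using C i ch(2)[OF iS] by (intro sum.mono_neutral_left) auto
      then show "(\<Sum>l\<in>C. trans_prob U V p (det_policy ch) \<nu> i l) = 1"
        using tp[OF iS] avg_kernel_sum[OF game SR iS ch(1)[OF iS]] by simp
      fix l assume "l \<in> {1..n} - C"
      then show "trans_prob U V p (det_policy ch) \<nu> i l = 0"
        using tp[OF iS] ch(2)[OF iS i] by simp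
    next
      fix i l assume "i \<in> {1..n}" "l \<in> {1..n}"
      then show "0 \<le> trans_prob U V p (det_policy ch) \<nu> i l"
        using tp avg_kernel_nonneg[OF game SR _ ch(1)] by simp
    qed
    moreover have "is_SR_policy n U (det_policy ch)"
      using is_SR_policy_det_policy[OF game ch(1)] .
    ultimately show thesis
      using proper by (auto simp: proper_II_def)
  qed simp
qed

subsection \<open>Contraction weights\<close>

lemma finite_positive_lower_bound:
  fixes D :: "real set"
  assumes "finite D" "\<And>d. d \<in> D \<Longrightarrow> 0 < d"
  obtains c where "0 < c" "c < 1" "\<And>d. d \<in> D \<Longrightarrow> c < d"
  using assms
proof (induction D arbitrary: thesis rule: finite_induct)
  case empty
  then show ?case by (intro empty.prems(1)[of "1 / 2"]) auto
next
  case (insert d D)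
  then obtain c where c: "0 < c" "c < 1" "\<And>d. d \<in> D \<Longrightarrow> c < d" by blast
  have "0 < d" using insert.prems(2) by simp
  with c show ?case by (intro insert.prems(1)[of "min c (d / 2)"]) (auto simp: min_less_iff_disj)
qed

lemma strict_weights_of_ranking:
  fixes q :: "'s \<Rightarrow> 'a \<Rightarrow> 's \<Rightarrow> real" and r :: "'s \<Rightarrow> nat"
  assumes fin: "finite S" "\<And>j. j \<in> S \<Longrightarrow> finite (A j)"
    and nonneg: "\<And>j u k. j \<in> S \<Longrightarrow> u \<in> A j \<Longrightarrow> k \<in> S \<Longrightarrow> 0 \<le> q j u k"
    and substoch: "\<And>j u. j \<in> S \<Longrightarrow> u \<in> A j \<Longrightarrow> (\<Sum>k\<in>S. q j u k) \<le> 1"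
    and rank: "\<And>j u. j \<in> S \<Longrightarrow> u \<in> A j \<Longrightarrow>
                 (\<Sum>k\<in>S. q j u k) < 1 \<or> (\<exists>k\<in>S. 0 < q j u k \<and> r k < r j)"
  obtains x :: "'s \<Rightarrow> real" where "\<And>k. 1 \<le> x k"
    "\<And>j u. j \<in> S \<Longrightarrow> u \<in> A j \<Longrightarrow> (\<Sum>k\<in>S. q j u k * x k) < x j"
proof -
  define D where "D = (\<lambda>(j, u). 1 - (\<Sum>k\<in>S. q j u k)) ` {(j, u) \<in> Sigma S A. (\<Sum>k\<in>S. q j u k) < 1}
                     \<union> (\<lambda>(j, u, k). q j u k) ` {(j, u, k) \<in> Sigma S (\<lambda>j. A j \<times> S). 0 < q j u k}"
  have "finite (Sigma S A)" "finite (Sigma S (\<lambda>j. A j \<times> S))"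
    using fin by (auto intro!: finite_SigmaI)
  then have finD: "finite D"
    unfolding D_def by (auto intro: finite_subset[of _ "Sigma S A"] finite_subset[of _ "Sigma S (\<lambda>j. A j \<times> S)"])
  moreover have "\<And>d. d \<in> D \<Longrightarrow> 0 < d" unfolding D_def by auto
  ultimately obtain c :: real where c: "0 < c" "c < 1" and cD: "\<And>d. d \<in> D \<Longrightarrow> c < d"
    using finite_positive_lower_bound by metis
  define x where "x k = 2 - c ^ Suc (r k)" for k
  have cpow: "0 < c ^ m" "c ^ m \<le> 1" for m using c by (auto intro: power_le_one)
  have "1 \<le> x k" for k unfolding x_def using cpow[of "Suc (r k)"] by simp
  moreover have "(\<Sum>k\<in>S. q j u k * x k) < x j" if j: "j \<in> S" and u: "u \<in> A j" for j u
  proof -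
    let ?s = "\<Sum>k\<in>S. q j u k"
    have nn: "\<And>k. k \<in> S \<Longrightarrow> 0 \<le> q j u k * c ^ Suc (r k)"
      by (intro mult_nonneg_nonneg nonneg[OF j u] less_imp_le[OF cpow(1)])
    have eq: "(\<Sum>k\<in>S. q j u k * x k) = 2 * ?s - (\<Sum>k\<in>S. q j u k * c ^ Suc (r k))"
      unfolding x_def by (simp add: algebra_simps sum_subtractf sum_distrib_left)
    have cj: "c ^ Suc (r j) \<le> c" using c by (simp add: power_le_one mult_left_le)
    from rank[OF j u] show ?thesis
    proof
      assume "?s < 1"
      then have "1 - ?s \<in> D"
        unfolding D_def using j u by (auto intro!: image_eqI[where x = "(j, u)"])
      then have "c < 1 - ?s" by (rule cD)
      moreover have "0 \<le> (\<Sum>k\<in>S. q j u k * c ^ Suc (r k))" using nn by (rule sum_nonneg)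
      ultimately show ?thesis using eq cj c(1) unfolding x_def by linarith
    next
      assume "\<exists>k\<in>S. 0 < q j u k \<and> r k < r j"
      then obtain k where k: "k \<in> S" "0 < q j u k" "r k < r j" by blast
      have "q j u k \<in> D"
        unfolding D_def using j u k by (auto intro!: image_eqI[where x = "(j, u, k)"])
      then have "c < q j u k" by (rule cD)
      then have "c ^ Suc (r j) < q j u k * c ^ Suc (r k)"
        using c k(3) cpow[of "Suc (r k)"] power_decreasing[of "Suc (Suc (r k))" "Suc (r j)" c]
        by (simp add: mult_strict_right_mono order_le_less_trans)
      moreover have "q j u k * c ^ Suc (r k) \<le> (\<Sum>k\<in>S. q j u k * c ^ Suc (r k))"
        using k(1) fin(1) by (intro member_le_sum nn) auto
      ultimately show ?thesis using eq substoch[OF j u] unfolding x_def by linarith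
    qed
  qed
  ultimately show thesis by (rule that)
qed

lemma uniform_ratio_bound:
  fixes a b :: "'i \<Rightarrow> real"
  assumes "finite I" "\<And>i. i \<in> I \<Longrightarrow> 0 \<le> a i" "\<And>i. i \<in> I \<Longrightarrow> a i < b i"
  obtains \<rho> where "0 \<le> \<rho>" "\<rho> < 1" "\<And>i. i \<in> I \<Longrightarrow> a i \<le> \<rho> * b i"
proof
  let ?\<rho> = "Max (insert 0 ((\<lambda>i. a i / b i) ` I))"
  show "0 \<le> ?\<rho>" using assms(1) by simp
  have "0 < b i" if "i \<in> I" for i
    using assms(2,3)[OF that] by linarith
  then show "?\<rho> < 1" using assms by (subst Max_less_iff) auto
  fix i assume i: "i \<in> I"
  then have "a i / b i \<le> ?\<rho>" using assms(1) by (intro Max_ge) auto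
  then show "a i \<le> ?\<rho> * b i" using assms(2,3)[OF i] by (simp add: divide_le_eq)
qed

lemma contraction_weights_of_ranking:
  fixes q :: "'s \<Rightarrow> 'a \<Rightarrow> 's \<Rightarrow> real" and r :: "'s \<Rightarrow> nat"
  assumes fin: "finite S" "\<And>j. j \<in> S \<Longrightarrow> finite (A j)"
    and nonneg: "\<And>j u k. j \<in> S \<Longrightarrow> u \<in> A j \<Longrightarrow> k \<in> S \<Longrightarrow> 0 \<le> q j u k"
    and substoch: "\<And>j u. j \<in> S \<Longrightarrow> u \<in> A j \<Longrightarrow> (\<Sum>k\<in>S. q j u k) \<le> 1"
    and rank: "\<And>j u. j \<in> S \<Longrightarrow> u \<in> A j \<Longrightarrow>
                 (\<Sum>k\<in>S. q j u k) < 1 \<or> (\<exists>k\<in>S. 0 < q j u k \<and> r k < r j)"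
  obtains x :: "'s \<Rightarrow> real" and \<rho> :: real where "\<And>k. 1 \<le> x k" "0 \<le> \<rho>" "\<rho> < 1"
    "\<And>j u. j \<in> S \<Longrightarrow> u \<in> A j \<Longrightarrow> (\<Sum>k\<in>S. q j u k * x k) \<le> \<rho> * x j"
proof -
  obtain x where x: "\<And>k. 1 \<le> x k"
    and strict: "\<And>j u. j \<in> S \<Longrightarrow> u \<in> A j \<Longrightarrow> (\<Sum>k\<in>S. q j u k * x k) < x j"
    using strict_weights_of_ranking[of S A q r, OF fin nonneg substoch rank] by blast
  let ?a = "\<lambda>(j, u). \<Sum>k\<in>S. q j u k * x k" and ?b = "\<lambda>(j, u). x j"
  have finSA: "finite (Sigma S A)" using fin by (rule finite_SigmaI)
  have a_nonneg: "0 \<le> ?a ju" if "ju \<in> Sigma S A" for ju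
    using that nonneg order_trans[OF zero_le_one x] by (auto intro!: sum_nonneg)
  have a_less: "?a ju < ?b ju" if "ju \<in> Sigma S A" for ju
    using that strict by auto
  obtain \<rho> where \<rho>: "0 \<le> \<rho>" "\<rho> < 1" and bound: "\<And>ju. ju \<in> Sigma S A \<Longrightarrow> ?a ju \<le> \<rho> * ?b ju"
    using uniform_ratio_bound[of "Sigma S A" ?a ?b, OF finSA a_nonneg a_less] by blast
  show thesis
  proof (rule that[of x \<rho>, OF x \<rho>])
    fix j u assume "j \<in> S" "u \<in> A j"
    then show "(\<Sum>k\<in>S. q j u k * x k) \<le> \<rho> * x j" using bound[of "(j, u)"] by simp
  qed
qed

subsection \<open>The weighted sup-norm and the contraction property\<close>

lemma finite_Rset: "ssp_game n U V p \<Longrightarrow> finite (Rset n U V)"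
  by (rule finite_subset[of _ "Sigma {1..n} (\<lambda>i. U i \<times> V i)"])
     (auto simp: Rset_def ssp_game_def intro!: finite_SigmaI)

lemma wnorm_nonneg: "finite (Rset n U V) \<Longrightarrow> 0 \<le> wnorm n U V \<xi> Q"
  unfolding wnorm_def by simp

lemma abs_le_wnorm_mult:
  assumes "finite (Rset n U V)" "(i, u, v) \<in> Rset n U V" "0 < \<xi> i u v"
  shows "\<bar>Q i u v\<bar> \<le> wnorm n U V \<xi> Q * \<xi> i u v"
proof -
  have "\<bar>Q i u v\<bar> / \<xi> i u v \<le> wnorm n U V \<xi> Q"
    unfolding wnorm_def using assms(1,2) by (intro Max_ge) force+
  then show ?thesis using assms(3) by (simp add: divide_le_eq)
qed

lemma wnorm_le:
  assumes "finite (Rset n U V)" "0 \<le> c"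
    and "\<And>i u v. (i, u, v) \<in> Rset n U V \<Longrightarrow> 0 < \<xi> i u v \<and> \<bar>Q i u v\<bar> \<le> c * \<xi> i u v"
  shows "wnorm n U V \<xi> Q \<le> c"
  unfolding wnorm_def using assms by (auto simp: Max_le_iff divide_le_eq)

lemma abs_Min_image_diff_le:
  fixes f g :: "'a \<Rightarrow> real"
  assumes "finite A" "A \<noteq> {}" "\<And>a. a \<in> A \<Longrightarrow> \<bar>f a - g a\<bar> \<le> K"
  shows "\<bar>Min (f ` A) - Min (g ` A)\<bar> \<le> K"
proof -
  have "Min (g ` A) \<in> g ` A" "Min (f ` A) \<in> f ` A"
    using assms(1,2) by (intro Min_in; simp)+
  then obtain a b where a: "a \<in> A" "Min (g ` A) = g a" and b: "b \<in> A" "Min (f ` A) = f b"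
    by blast
  have "f b \<le> f a" "g a \<le> g b" using a b assms(1) by (metis Min_le finite_imageI image_eqI)+
  then show ?thesis using assms(3)[OF a(1)] assms(3)[OF b(1)] a b by linarith
qed

definition ssp_weight :: "nat \<Rightarrow> (nat \<Rightarrow> nat \<Rightarrow> 'u \<Rightarrow> 'v \<Rightarrow> real) \<Rightarrow> (nat \<Rightarrow> real) \<Rightarrow> nat \<Rightarrow> 'u \<Rightarrow> 'v \<Rightarrow> real" where
  "ssp_weight n p x i u v = 1 + (\<Sum>k\<in>{1..n}. p i k u v * x k)"

lemma ssp_weight_ge_one:
  assumes "ssp_game n U V p" "(i, u, v) \<in> Rset n U V" "\<And>k. 1 \<le> x k"
  shows "1 \<le> ssp_weight n p x i u v"
  using assms(1,2) order_trans[OF zero_le_one assms(3)]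
  unfolding ssp_weight_def Rset_def ssp_game_def by (auto intro!: sum_nonneg)

lemma expected_ssp_weight:
  assumes "is_SR_policy n V \<nu>" "j \<in> {1..n}"
  shows "(\<Sum>v\<in>V j. \<nu> j v * ssp_weight n p x j u v) = 1 + (\<Sum>k\<in>{1..n}. avg_kernel V p \<nu> j u k * x k)"
  using assms unfolding ssp_weight_def avg_kernel_def is_SR_policy_def
  by (simp add: algebra_simps sum.distrib sum_distrib_left sum_distrib_right sum.swap[of _ "V j"])

lemma abs_Min_expected_diff_le:
  assumes game: "ssp_game n U V p" and SR: "is_SR_policy n V \<nu>" and j: "j \<in> {1..n}"
    and diff: "\<And>u v. u \<in> U j \<Longrightarrow> v \<in> V j \<Longrightarrow> \<bar>Q j u v - Q' j u v\<bar> \<le> N * \<xi> j u v"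
    and bound: "\<And>u. u \<in> U j \<Longrightarrow> (\<Sum>v\<in>V j. \<nu> j v * \<xi> j u v) \<le> K"
    and "0 \<le> N"
  shows "\<bar>Min ((\<lambda>u. \<Sum>v\<in>V j. \<nu> j v * Q j u v) ` U j) - Min ((\<lambda>u. \<Sum>v\<in>V j. \<nu> j v * Q' j u v) ` U j)\<bar>
         \<le> N * K"
proof (rule abs_Min_image_diff_le)
  show "finite (U j)" "U j \<noteq> {}" using game j by (auto simp: ssp_game_def)
  fix u assume u: "u \<in> U j"
  have \<nu>: "\<And>v. v \<in> V j \<Longrightarrow> 0 \<le> \<nu> j v" using SR j by (simp add: is_SR_policy_def)
  have "\<bar>(\<Sum>v\<in>V j. \<nu> j v * Q j u v) - (\<Sum>v\<in>V j. \<nu> j v * Q' j u v)\<bar>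
        = \<bar>\<Sum>v\<in>V j. \<nu> j v * (Q j u v - Q' j u v)\<bar>"
    by (simp add: sum_subtractf right_diff_distrib)
  also have "\<dots> \<le> (\<Sum>v\<in>V j. \<nu> j v * (N * \<xi> j u v))"
    using \<nu> diff[OF u] by (intro order_trans[OF sum_abs] sum_mono) (simp add: abs_mult mult_left_mono)
  also have "\<dots> = N * (\<Sum>v\<in>V j. \<nu> j v * \<xi> j u v)"
    by (simp add: sum_distrib_left algebra_simps)
  also have "\<dots> \<le> N * K"
    using bound[OF u] \<open>0 \<le> N\<close> by (rule mult_left_mono)
  finally show "\<bar>(\<Sum>v\<in>V j. \<nu> j v * Q j u v) - (\<Sum>v\<in>V j. \<nu> j v * Q' j u v)\<bar> \<le> N * K" .
qed

lemma contraction_factor_ineq: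
  fixes a s \<rho> :: real
  assumes "a \<le> 1" "a \<le> s" "0 \<le> \<rho>" "\<rho> < 1"
  shows "a + \<rho> * s \<le> (1 + \<rho>) / 2 * (1 + s)"
proof (cases "s \<le> 1")
  case True
  have "(1 + \<rho>) * (s - 1) \<le> 0" using True assms by (intro mult_nonneg_nonpos) auto
  then show ?thesis using assms by (simp add: algebra_simps)
next
  case False
  have "0 \<le> (1 - \<rho>) * (s - 1)" using False assms by (intro mult_nonneg_nonneg) auto
  then show ?thesis using assms by (simp add: algebra_simps)
qed

lemma abs_F_map_diff_le:
  assumes game: "ssp_game n U V p" and R: "(i, u, v) \<in> Rset n U V"
    and x: "\<And>k. 1 \<le> x k" and \<rho>: "0 \<le> \<rho>" "\<rho> < 1" and N: "0 \<le> N"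
    and Min_diff: "\<And>j. j \<in> {1..n} \<Longrightarrow>
      \<bar>Min ((\<lambda>u. \<Sum>v\<in>V j. \<nu> j v * Q j u v) ` U j) - Min ((\<lambda>u. \<Sum>v\<in>V j. \<nu> j v * Q' j u v) ` U j)\<bar>
      \<le> N * (1 + \<rho> * x j)"
  shows "\<bar>F_map n U V p g \<nu> Q i u v - F_map n U V p g \<nu> Q' i u v\<bar> \<le> (1 + \<rho>) / 2 * N * ssp_weight n p x i u v"
proof -
  define M where "M Z j = Min ((\<lambda>u. \<Sum>v\<in>V j. \<nu> j v * Z j u v) ` U j)" for Z j
  have p: "\<And>j. j \<in> {0..n} \<Longrightarrow> 0 \<le> p i j u v" "(\<Sum>j\<in>{0..n}. p i j u v) = 1"
    using game R by (auto simp: ssp_game_def Rset_def)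
  let ?a = "\<Sum>j\<in>{1..n}. p i j u v" and ?s = "\<Sum>j\<in>{1..n}. p i j u v * x j"
  have "\<bar>F_map n U V p g \<nu> Q i u v - F_map n U V p g \<nu> Q' i u v\<bar>
        = \<bar>\<Sum>j\<in>{1..n}. p i j u v * (M Q j - M Q' j)\<bar>"
    unfolding F_map_def M_def by (simp add: sum_subtractf right_diff_distrib)
  also have "\<dots> \<le> (\<Sum>j\<in>{1..n}. p i j u v * (N * (1 + \<rho> * x j)))"
    using p(1) Min_diff unfolding M_def
    by (intro order_trans[OF sum_abs] sum_mono) (simp add: abs_mult mult_left_mono)
  also have "\<dots> = N * (?a + \<rho> * ?s)"
    by (simp add: algebra_simps sum.distrib sum_distrib_left)
  also have "\<dots> \<le> N * ((1 + \<rho>) / 2 * (1 + ?s))"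
  proof (intro mult_left_mono[OF contraction_factor_ineq[OF _ _ \<rho>]] N)
    show "?a \<le> 1"
      using p(1)[of 0] p(2) sum.atLeast_Suc_atMost[of 0 n "\<lambda>j. p i j u v"] by simp
    show "?a \<le> ?s"
    proof (rule sum_mono)
      fix j assume "j \<in> {1..n}"
      then have "0 \<le> p i j u v" using p(1) by simp
      then show "p i j u v \<le> p i j u v * x j" using mult_left_mono[OF x[of j]] by simp
    qed
  qed
  finally show ?thesis by (simp add: ssp_weight_def algebra_simps)
qed

lemma F_map_contraction:
  assumes game: "ssp_game n U V p" and SR: "is_SR_policy n V \<nu>"
    and x: "\<And>k. 1 \<le> x k" and \<rho>: "0 \<le> \<rho>" "\<rho> < 1"
    and weights: "\<And>j u. j \<in> {1..n} \<Longrightarrow> u \<in> U j \<Longrightarrow>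
                    (\<Sum>k\<in>{1..n}. avg_kernel V p \<nu> j u k * x k) \<le> \<rho> * x j"
  shows "wnorm n U V (ssp_weight n p x) (\<lambda>i u v. F_map n U V p g \<nu> Q i u v - F_map n U V p g \<nu> Q' i u v)
         \<le> (1 + \<rho>) / 2 * wnorm n U V (ssp_weight n p x) (\<lambda>i u v. Q i u v - Q' i u v)"
proof -
  let ?\<xi> = "ssp_weight n p x"
  define N where "N = wnorm n U V ?\<xi> (\<lambda>i u v. Q i u v - Q' i u v)"
  have fin: "finite (Rset n U V)" using game by (rule finite_Rset)
  have N: "0 \<le> N" unfolding N_def using fin by (rule wnorm_nonneg)
  have \<xi>: "0 < ?\<xi> i u v" if "(i, u, v) \<in> Rset n U V" for i u v
    using ssp_weight_ge_one[where x = x, OF game that x] by linarith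
  have diff: "\<bar>Q i u v - Q' i u v\<bar> \<le> N * ?\<xi> i u v" if "(i, u, v) \<in> Rset n U V" for i u v
    using abs_le_wnorm_mult[OF fin that, of ?\<xi>] \<xi>[OF that] unfolding N_def by simp
  have "\<bar>Min ((\<lambda>u. \<Sum>v\<in>V j. \<nu> j v * Q j u v) ` U j) - Min ((\<lambda>u. \<Sum>v\<in>V j. \<nu> j v * Q' j u v) ` U j)\<bar>
        \<le> N * (1 + \<rho> * x j)" if j: "j \<in> {1..n}" for j
  proof (rule abs_Min_expected_diff_le[OF game SR j _ _ N])
    show "\<bar>Q j u v - Q' j u v\<bar> \<le> N * ?\<xi> j u v" if "u \<in> U j" "v \<in> V j" for u v
      using diff j that by (simp add: Rset_def)
    show "(\<Sum>v\<in>V j. \<nu> j v * ?\<xi> j u v) \<le> 1 + \<rho> * x j" if "u \<in> U j" for u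
      unfolding expected_ssp_weight[OF SR j] using weights[OF j that] by simp
  qed
  then have "\<bar>F_map n U V p g \<nu> Q i u v - F_map n U V p g \<nu> Q' i u v\<bar> \<le> (1 + \<rho>) / 2 * N * ?\<xi> i u v"
    if "(i, u, v) \<in> Rset n U V" for i u v
    using abs_F_map_diff_le[where x = x, OF game that x \<rho> N] by blast
  then show ?thesis
    unfolding N_def[symmetric] using fin \<rho> N \<xi> by (intro wnorm_le) auto
qed

lemma proper_imp_contraction_weights:
  assumes game: "ssp_game n U V p" and proper: "proper_II n U V p \<nu>"
  obtains x :: "nat \<Rightarrow> real" and \<rho> :: real where "\<And>k. 1 \<le> x k" "0 \<le> \<rho>" "\<rho> < 1"
    "\<And>j u. j \<in> {1..n} \<Longrightarrow> u \<in> U j \<Longrightarrow> (\<Sum>k\<in>{1..n}. avg_kernel V p \<nu> j u k * x k) \<le> \<rho> * x j"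
proof -
  let ?q = "avg_kernel V p \<nu>"
  have SR: "is_SR_policy n V \<nu>" using proper by (simp add: proper_II_def)
  obtain r :: "nat \<Rightarrow> nat" where rank: "\<And>j u. j \<in> {1..n} \<Longrightarrow> u \<in> U j \<Longrightarrow>
      0 < ?q j u 0 \<or> (\<exists>k\<in>{1..n}. 0 < ?q j u k \<and> r k < r j)"
    using proper_imp_ranking[OF game proper] by metis
  show thesis
  proof (rule contraction_weights_of_ranking[of "{1..n}" U ?q r])
    show "\<And>j. j \<in> {1..n} \<Longrightarrow> finite (U j)" using game by (simp add: ssp_game_def)
    show "\<And>j u k. j \<in> {1..n} \<Longrightarrow> u \<in> U j \<Longrightarrow> k \<in> {1..n} \<Longrightarrow> 0 \<le> ?q j u k"
      using avg_kernel_nonneg[OF game SR] by simp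
    show "(\<Sum>k\<in>{1..n}. ?q j u k) \<le> 1"
      and "(\<Sum>k\<in>{1..n}. ?q j u k) < 1 \<or> (\<exists>k\<in>{1..n}. 0 < ?q j u k \<and> r k < r j)"
      if "j \<in> {1..n}" "u \<in> U j" for j u
      using avg_kernel_sum_states[OF game SR that] avg_kernel_nonneg[OF game SR that, of 0] rank[OF that]
      by auto
  qed (simp, blast intro: that)
qed

theorem lemma4p8:
  fixes n :: nat and U :: "nat \<Rightarrow> 'u set" and V :: "nat \<Rightarrow> 'v set"
    and p :: "nat \<Rightarrow> nat \<Rightarrow> 'u \<Rightarrow> 'v \<Rightarrow> real" and g :: "nat \<Rightarrow> 'u \<Rightarrow> 'v \<Rightarrow> real"
    and \<nu> :: "nat \<Rightarrow> 'v \<Rightarrow> real"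
  assumes "ssp_game n U V p"
    and "proper_II n U V p \<nu>"
  shows "\<exists>\<xi> \<beta>. (\<forall>(i, u, v)\<in>Rset n U V. \<xi> i u v > 0) \<and> 0 \<le> \<beta> \<and> \<beta> < 1 \<and>
           (\<forall>Q Q'. wnorm n U V \<xi> (\<lambda>i u v. F_map n U V p g \<nu> Q i u v - F_map n U V p g \<nu> Q' i u v)
                  \<le> \<beta> * wnorm n U V \<xi> (\<lambda>i u v. Q i u v - Q' i u v))"
proof -
  have SR: "is_SR_policy n V \<nu>" using assms(2) by (simp add: proper_II_def)
  obtain x \<rho> where x: "\<And>k. 1 \<le> x k" and \<rho>: "0 \<le> \<rho>" "\<rho> < 1"
    and weights: "\<And>j u. j \<in> {1..n} \<Longrightarrow> u \<in> U j \<Longrightarrow>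
                    (\<Sum>k\<in>{1..n}. avg_kernel V p \<nu> j u k * x k) \<le> \<rho> * x j"
    using proper_imp_contraction_weights[OF assms] by blast
  show ?thesis
  proof (intro exI[of _ "ssp_weight n p x"] exI[of _ "(1 + \<rho>) / 2"] conjI allI)
    show "\<forall>(i, u, v)\<in>Rset n U V. 0 < ssp_weight n p x i u v"
      using ssp_weight_ge_one[where x = x, OF assms(1) _ x] by fastforce
    show "0 \<le> (1 + \<rho>) / 2" "(1 + \<rho>) / 2 < 1" using \<rho> by auto
    show "wnorm n U V (ssp_weight n p x) (\<lambda>i u v. F_map n U V p g \<nu> Q i u v - F_map n U V p g \<nu> Q' i u v)
          \<le> (1 + \<rho>) / 2 * wnorm n U V (ssp_weight n p x) (\<lambda>i u v. Q i u v - Q' i u v)" for Q Q'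
      by (rule F_map_contraction[where x = x, OF assms(1) SR x \<rho> weights])
  qed
qed

end
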